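(* Let $A=\mathrm{diag}(\lambda_1,\ldots,\lambda_n)$ with $1=\lambda_1\le\lambda_2\le\cdots\le\lambda_n$, let $b\in\mathbb{R}^n$, and $f(x)=\tfrac12x^TAx-b^Tx$, with gradient $g(x)=Ax-b$. Consider the gradient method $x_{k+1}=x_k-\alpha_kg_k$, $g_k=g(x_k)$, started from $x_1\in\mathbb{R}^n$ with an arbitrary first stepsize $\alpha_1>0$, and for $k\ge2$ (as long as $g_{k-1}\neq0$) $$\alpha_k=\gamma_k\frac{s_{k-1}^Ts_{k-1}}{s_{k-1}^Ty_{k-1}}+(1-\gamma_k)\frac{s_{k-1}^Ty_{k-1}}{y_{k-1}^Ty_{k-1}},\qquad s_{k-1}=x_k-x_{k-1},\ y_{k-1}=g_k-g_{k-1},$$ where $\gamma_k\in[0,1]$ for every $k$. Then either $g_k=0$ for some finite $k$, or the sequence $\{\|g_k\|\}$ converges to zero $R$-linearly.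
   Context: $\|\cdot\|$ is the Euclidean norm. A nonnegative sequence $\{a_k\}$ converges to zero $R$-linearly if there exist constants $C>0$ and $c\in(0,1)$ with $a_k\le Cc^k$ for all $k$. *)

theory Defs
  imports Complex_Main
begin

text \<open>Vectors in R^n are represented as functions nat => real, with coordinates 1..n.\<close>

definition vinner :: "nat \<Rightarrow> (nat \<Rightarrow> real) \<Rightarrow> (nat \<Rightarrow> real) \<Rightarrow> real" where
  "vinner n u v = (\<Sum>i=1..n. u i * v i)"

definition vnorm :: "nat \<Rightarrow> (nat \<Rightarrow> real) \<Rightarrow> real" where
  "vnorm n u = sqrt (vinner n u u)"

definition grad :: "(nat \<Rightarrow> real) \<Rightarrow> (nat \<Rightarrow> real) \<Rightarrow> (nat \<Rightarrow> real) \<Rightarrow> (nat \<Rightarrow> real)" where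
  "grad lam b x = (\<lambda>i. lam i * x i - b i)"

end

theory Submission
  imports Defs
begin

text \<open>Since A is diagonal, the gradient components evolve independently,
  g_{k+1,i} = (1 - \<alpha>_k \<lambda>_i) g_{k,i}, and the stepsize \<alpha>_{k+1} is a convex combination of the
  two Barzilai--Borwein quotients of g_k, hence lies in [1/\<lambda>_n, 1]; so no component grows by
  more than a factor \<lambda>_n per step.  By induction on l, the head g_{k,1}^2 + ... + g_{k,l}^2
  vanishes R-linearly.  If g_{k,l+1}^2 is at least twice the head, both quotients, being
  Rayleigh quotients dominated by the tail components, give \<alpha>_{k+1} \<lambda>_{l+1} \<le> 3/2, so
  |g_{k+2,l+1}| is at most max (1/2) (1 - 1/\<lambda>_n) times |g_{k+1,l+1}|; otherwise g_{k,l+1}^2 is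
  bounded by the head, and g_{k+2,l+1}^2 by \<lambda>_n^4 times that.  Either way g_{k,l+1}^2 also
  vanishes R-linearly.\<close>

definition r_linear_from :: "nat \<Rightarrow> (nat \<Rightarrow> real) \<Rightarrow> bool" where
  "r_linear_from k0 u \<longleftrightarrow> (\<exists>C c. 0 < C \<and> 0 < c \<and> c < 1 \<and> (\<forall>k\<ge>k0. u k \<le> C * c ^ k))"

lemma r_linear_from_zero: "r_linear_from k0 (\<lambda>_. 0)"
  unfolding r_linear_from_def by (rule exI[of _ 1], rule exI[of _ "1/2"]) auto

lemma r_linear_from_cmult:
  assumes "0 < a" and "r_linear_from k0 u"
  shows "r_linear_from k0 (\<lambda>k. a * u k)"
proof -
  obtain C c where "0 < C" "0 < c" "c < 1" and u: "\<forall>k\<ge>k0. u k \<le> C * c ^ k"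
    using assms(2) unfolding r_linear_from_def by blast
  then show ?thesis
    unfolding r_linear_from_def using \<open>0 < a\<close>
    by (intro exI[of _ "a * C"] exI[of _ c]) (auto simp: mult.assoc)
qed

lemma r_linear_from_add:
  assumes "r_linear_from k0 u" and "r_linear_from k0 v"
  shows "r_linear_from k0 (\<lambda>k. u k + v k)"
proof -
  obtain C c where C: "0 < C" "0 < c" "c < 1" and u: "\<forall>k\<ge>k0. u k \<le> C * c ^ k"
    using assms(1) unfolding r_linear_from_def by blast
  obtain D d where D: "0 < D" "0 < d" "d < 1" and v: "\<forall>k\<ge>k0. v k \<le> D * d ^ k"
    using assms(2) unfolding r_linear_from_def by blast
  have "u k + v k \<le> (C + D) * max c d ^ k" if "k0 \<le> k" for k
  proof -
    have "u k + v k \<le> C * c ^ k + D * d ^ k"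
      using u v that by (simp add: add_mono)
    also have "\<dots> \<le> C * max c d ^ k + D * max c d ^ k"
      using C D by (intro add_mono mult_left_mono power_mono) auto
    finally show ?thesis
      by (simp add: algebra_simps)
  qed
  then show ?thesis
    unfolding r_linear_from_def using C D
    by (intro exI[of _ "C + D"] exI[of _ "max c d"]) auto
qed

lemma r_linear_from_sqrt:
  assumes "r_linear_from k0 u"
  shows "r_linear_from k0 (\<lambda>k. sqrt (u k))"
proof -
  obtain C c where C: "0 < C" "0 < c" "c < 1" and u: "\<forall>k\<ge>k0. u k \<le> C * c ^ k"
    using assms unfolding r_linear_from_def by blast
  have "sqrt (u k) \<le> sqrt C * sqrt c ^ k" if "k0 \<le> k" for k
    using u that real_sqrt_le_mono by (fastforce simp: real_sqrt_mult real_sqrt_power)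
  then show ?thesis
    unfolding r_linear_from_def using C
    by (intro exI[of _ "sqrt C"] exI[of _ "sqrt c"]) auto
qed

lemma r_linear_from_Suc:
  assumes "r_linear_from (Suc k0) u"
  shows "r_linear_from k0 u"
proof -
  obtain C c where C: "0 < C" "0 < c" "c < 1" and u: "\<forall>k\<ge>Suc k0. u k \<le> C * c ^ k"
    using assms unfolding r_linear_from_def by blast
  define C' where "C' = max C (u k0 / c ^ k0)"
  have "u k \<le> C' * c ^ k" if "k0 \<le> k" for k
  proof (cases "k = k0")
    case True
    have "u k0 = u k0 / c ^ k0 * c ^ k0"
      using C by simp
    also have "\<dots> \<le> C' * c ^ k0"
      unfolding C'_def using C by (intro mult_right_mono) auto
    finally show ?thesis
      using True by simp
  next
    case False
    then have "u k \<le> C * c ^ k"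
      using u that by simp
    also have "\<dots> \<le> C' * c ^ k"
      unfolding C'_def using C by (intro mult_right_mono) auto
    finally show ?thesis .
  qed
  then show ?thesis
    unfolding r_linear_from_def using C
    by (intro exI[of _ C'] exI[of _ c]) (auto simp: C'_def less_max_iff_disj)
qed

text \<open>Induction in steps of two: where u is below e, two steps later it is at most M^2 e;
  elsewhere it contracts by r.\<close>
lemma r_linear_from_two_step:
  fixes u e :: "nat \<Rightarrow> real"
  assumes e: "r_linear_from k0 e"
    and M: "0 \<le> M" and r: "0 \<le> r" "r < 1"
    and u_nonneg: "\<And>k. 0 \<le> u k"
    and grow: "\<And>k. k0 \<le> k \<Longrightarrow> u (Suc k) \<le> M * u k"
    and contract: "\<And>k. k0 \<le> k \<Longrightarrow> e k \<le> u k \<Longrightarrow> u (Suc (Suc k)) \<le> r * u (Suc k)"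
  shows "r_linear_from k0 u"
proof -
  obtain C c where C: "0 < C" "0 < c" "c < 1" and e_le: "\<forall>k\<ge>k0. e k \<le> C * c ^ k"
    using e unfolding r_linear_from_def by blast
  define \<eta> where "\<eta> = max r c"
  have \<eta>: "0 < \<eta>" "\<eta> < 1" "r \<le> \<eta>" "c \<le> \<eta>"
    using C r by (auto simp: \<eta>_def)
  define D where "D = M\<^sup>2 * C / \<eta>\<^sup>2 + u k0 / \<eta> ^ k0 + u (Suc k0) / \<eta> ^ Suc k0 + 1"
  have D_ge: "M\<^sup>2 * C / \<eta>\<^sup>2 \<le> D" "u k0 / \<eta> ^ k0 \<le> D" "u (Suc k0) / \<eta> ^ Suc k0 \<le> D"
    using \<eta> C u_nonneg[of k0] u_nonneg[of "Suc k0"] by (auto simp: D_def)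
  have D_pos: "0 < D"
    using \<eta> C u_nonneg[of k0] u_nonneg[of "Suc k0"] by (auto simp: D_def intro!: add_nonneg_pos)
  have "u (k0 + m) \<le> D * \<eta> ^ (k0 + m) \<and> u (Suc (k0 + m)) \<le> D * \<eta> ^ Suc (k0 + m)" for m
  proof (induction m)
    case 0
    show ?case
      using D_ge(2,3) \<eta> by (simp add: pos_divide_le_eq del: power_Suc)
  next
    case (Suc m)
    define k where "k = k0 + m"
    have IH: "u k \<le> D * \<eta> ^ k" "u (Suc k) \<le> D * \<eta> ^ Suc k"
      using Suc.IH by (simp_all add: k_def)
    have "u (Suc (Suc k)) \<le> D * \<eta> ^ Suc (Suc k)"
    proof (cases "e k \<le> u k")
      case True
      have "u (Suc (Suc k)) \<le> r * u (Suc k)"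
        using contract True by (simp add: k_def)
      also have "\<dots> \<le> \<eta> * (D * \<eta> ^ Suc k)"
        using IH \<eta> r u_nonneg by (intro mult_mono) auto
      finally show ?thesis
        by (simp add: algebra_simps)
    next
      case False
      have "u (Suc (Suc k)) \<le> M * u (Suc k)"
        using grow by (simp add: k_def)
      also have "\<dots> \<le> M * (M * u k)"
        using grow M by (intro mult_left_mono) (auto simp: k_def)
      also have "\<dots> \<le> M\<^sup>2 * (C * \<eta> ^ k)"
      proof -
        have "u k \<le> C * c ^ k"
          using False e_le[rule_format, of k] by (simp add: k_def)
        also have "\<dots> \<le> C * \<eta> ^ k"
          using C \<eta> by (intro mult_left_mono power_mono) auto
        finally show ?thesis
          using M by (simp add: power2_eq_square mult.assoc mult_left_mono)
      qed
      also have "\<dots> = M\<^sup>2 * C / \<eta>\<^sup>2 * \<eta> ^ Suc (Suc k)"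
        using \<eta> by (simp add: field_simps power2_eq_square)
      also have "\<dots> \<le> D * \<eta> ^ Suc (Suc k)"
        using D_ge(1) \<eta> by (intro mult_right_mono) auto
      finally show ?thesis .
    qed
    then show ?case
      using IH by (simp add: k_def)
  qed
  then have "u k \<le> D * \<eta> ^ k" if "k0 \<le> k" for k
    using that by (metis le_add_diff_inverse)
  then show ?thesis
    unfolding r_linear_from_def using D_pos \<eta>
    by (intro exI[of _ D] exI[of _ \<eta>]) auto
qed

definition spec_moment :: "nat \<Rightarrow> (nat \<Rightarrow> real) \<Rightarrow> (nat \<Rightarrow> real) \<Rightarrow> nat \<Rightarrow> real" where
  "spec_moment n lam g p = (\<Sum>i=1..n. lam i ^ p * g i ^ 2)"

text \<open>For s parallel to g and y i = lam i * s i, the quotients of consecutive spectral moments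
  are the Barzilai--Borwein stepsizes s's/s'y and s'y/y'y.\<close>
definition bb_step :: "nat \<Rightarrow> (nat \<Rightarrow> real) \<Rightarrow> real \<Rightarrow> (nat \<Rightarrow> real) \<Rightarrow> real" where
  "bb_step n lam gm g =
     gm * (spec_moment n lam g 0 / spec_moment n lam g 1)
     + (1 - gm) * (spec_moment n lam g 1 / spec_moment n lam g 2)"

lemma spec_moment_pos:
  assumes "\<And>i. i \<in> {1..n} \<Longrightarrow> 0 < lam i" and "\<exists>i\<in>{1..n}. g i \<noteq> 0"
  shows "0 < spec_moment n lam g p"
proof -
  obtain j where j: "j \<in> {1..n}" "g j \<noteq> 0"
    using assms(2) by blast
  have "0 < lam j ^ p * g j ^ 2"
    using j assms(1) by simp
  also have "\<dots> \<le> spec_moment n lam g p"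
    unfolding spec_moment_def using j assms(1) by (intro member_le_sum) (auto simp: less_imp_le)
  finally show ?thesis .
qed

lemma spec_moment_Suc_bounds:
  assumes "\<And>i. i \<in> {1..n} \<Longrightarrow> 1 \<le> lam i \<and> lam i \<le> L"
  shows "spec_moment n lam g p \<le> spec_moment n lam g (Suc p)"
    and "spec_moment n lam g (Suc p) \<le> L * spec_moment n lam g p"
proof -
  have "lam i ^ p * g i ^ 2 \<le> lam i ^ Suc p * g i ^ 2"
    and "lam i ^ Suc p * g i ^ 2 \<le> L * (lam i ^ p * g i ^ 2)" if "i \<in> {1..n}" for i
  proof -
    have "0 \<le> lam i ^ p * g i ^ 2"
      using assms[OF that] by simp
    with assms[OF that] have "1 * (lam i ^ p * g i ^ 2) \<le> lam i * (lam i ^ p * g i ^ 2)"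
      and "lam i * (lam i ^ p * g i ^ 2) \<le> L * (lam i ^ p * g i ^ 2)"
      by (meson mult_right_mono)+
    then show "lam i ^ p * g i ^ 2 \<le> lam i ^ Suc p * g i ^ 2"
      and "lam i ^ Suc p * g i ^ 2 \<le> L * (lam i ^ p * g i ^ 2)"
      by (simp_all add: mult.assoc)
  qed
  then show "spec_moment n lam g p \<le> spec_moment n lam g (Suc p)"
    and "spec_moment n lam g (Suc p) \<le> L * spec_moment n lam g p"
    unfolding spec_moment_def sum_distrib_left by (auto intro!: sum_mono)
qed

lemma spec_moment_quotient_bounds:
  assumes "\<And>i. i \<in> {1..n} \<Longrightarrow> 1 \<le> lam i \<and> lam i \<le> L" and "\<exists>i\<in>{1..n}. g i \<noteq> 0"
  shows "1 / L \<le> spec_moment n lam g p / spec_moment n lam g (Suc p)"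
    and "spec_moment n lam g p / spec_moment n lam g (Suc p) \<le> 1"
proof -
  have lam_pos: "0 < lam i" if "i \<in> {1..n}" for i
    using assms(1)[OF that] by linarith
  have "0 < spec_moment n lam g p" "0 < spec_moment n lam g (Suc p)"
    using spec_moment_pos[of n lam g, OF lam_pos assms(2)] by blast+
  moreover have "0 < L"
    using assms by force
  ultimately show "1 / L \<le> spec_moment n lam g p / spec_moment n lam g (Suc p)"
    "spec_moment n lam g p / spec_moment n lam g (Suc p) \<le> 1"
    using spec_moment_Suc_bounds[of n lam L g p, OF assms(1)] by (auto simp: field_simps)
qed

lemma bb_step_bounds:
  assumes "\<And>i. i \<in> {1..n} \<Longrightarrow> 1 \<le> lam i \<and> lam i \<le> L" and "\<exists>i\<in>{1..n}. g i \<noteq> 0"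
    and "0 \<le> gm" "gm \<le> 1"
  shows "1 / L \<le> bb_step n lam gm g" and "bb_step n lam gm g \<le> 1"
proof -
  define q0 where "q0 = spec_moment n lam g 0 / spec_moment n lam g 1"
  define q1 where "q1 = spec_moment n lam g 1 / spec_moment n lam g 2"
  have q: "1 / L \<le> q0" "q0 \<le> 1" "1 / L \<le> q1" "q1 \<le> 1"
    using spec_moment_quotient_bounds[OF assms(1,2), where p=0] spec_moment_quotient_bounds[OF assms(1,2), where p=1]
    by (simp_all add: q0_def q1_def numeral_2_eq_2)
  have "gm * (- q0) + (1 - gm) * (- q1) \<le> - (1 / L)"
    using q assms(3,4) by (intro convex_bound_le) auto
  then show "1 / L \<le> bb_step n lam gm g"
    by (simp add: bb_step_def q0_def q1_def)
  have "gm * q0 + (1 - gm) * q1 \<le> 1"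
    using q assms(3,4) by (intro convex_bound_le) auto
  then show "bb_step n lam gm g \<le> 1"
    by (simp add: bb_step_def q0_def q1_def)
qed

lemma bb_step_secant:
  assumes "c \<noteq> 0" and s: "\<And>i. i \<in> {1..n} \<Longrightarrow> s i = c * g i"
    and y: "\<And>i. y i = lam i * s i"
  shows "gm * (vinner n s s / vinner n s y) + (1 - gm) * (vinner n s y / vinner n y y)
           = bb_step n lam gm g"
proof -
  have inner: "vinner n (\<lambda>i. lam i ^ p * s i) (\<lambda>i. lam i ^ q * s i)
                 = c\<^sup>2 * spec_moment n lam g (p + q)" for p q
    unfolding vinner_def spec_moment_def sum_distrib_left
    by (rule sum.cong) (auto simp: s power_add power2_eq_square algebra_simps)
  have "s = (\<lambda>i. lam i ^ 0 * s i)" and y_eq: "y = (\<lambda>i. lam i ^ 1 * s i)"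
    using y by auto
  then have "vinner n s s = c\<^sup>2 * spec_moment n lam g 0"
    "vinner n s y = c\<^sup>2 * spec_moment n lam g 1"
    "vinner n y y = c\<^sup>2 * spec_moment n lam g 2"
    using inner[of 0 0] inner[of 0 1] inner[of 1 1] by (simp_all add: numeral_2_eq_2)
  then show ?thesis
    using assms(1) by (simp add: bb_step_def)
qed

lemma weighted_sum_ge_if_tail_dominates:
  fixes w lam :: "nat \<Rightarrow> real"
  assumes "l < n" and "0 \<le> a"
    and w: "\<And>i. i \<in> {1..n} \<Longrightarrow> 0 \<le> w i"
    and lam: "\<And>i. i \<in> {1..n} \<Longrightarrow> 0 \<le> lam i"
    and tail: "\<And>i. i \<in> {Suc l..n} \<Longrightarrow> lam (Suc l) \<le> lam i"
    and head: "a * (\<Sum>i=1..l. w i) \<le> w (Suc l)"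
  shows "a * lam (Suc l) * (\<Sum>i=1..n. w i) \<le> (a + 1) * (\<Sum>i=1..n. lam i * w i)"
proof -
  have split: "(\<Sum>i=1..n. f i) = (\<Sum>i=1..l. f i) + (\<Sum>i=Suc l..n. f i)" for f :: "nat \<Rightarrow> real"
    using sum.ub_add_nat[of 1 l f "n - l"] \<open>l < n\<close> by simp
  define A where "A = (\<Sum>i=1..l. w i)"
  define B where "B = (\<Sum>i=Suc l..n. w i)"
  have "w (Suc l) \<le> B"
    unfolding B_def using \<open>l < n\<close> w by (intro member_le_sum) auto
  with head have AB: "a * A \<le> B"
    by (simp add: A_def)
  have lam_l: "0 \<le> lam (Suc l)"
    using lam \<open>l < n\<close> by simp
  have "lam (Suc l) * B \<le> (\<Sum>i=Suc l..n. lam i * w i)"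
    unfolding B_def sum_distrib_left using tail w \<open>l < n\<close> by (auto intro!: sum_mono mult_right_mono)
  also have "\<dots> \<le> (\<Sum>i=1..n. lam i * w i)"
    using split[of "\<lambda>i. lam i * w i"] lam w \<open>l < n\<close> by (auto intro!: sum_nonneg)
  finally have tail_bound: "lam (Suc l) * B \<le> (\<Sum>i=1..n. lam i * w i)" .
  moreover have "lam (Suc l) * (a * A) \<le> lam (Suc l) * B"
    using AB lam_l by (rule mult_left_mono)
  moreover have "(\<Sum>i=1..n. w i) = A + B"
    using split by (simp add: A_def B_def)
  ultimately have "a * lam (Suc l) * (\<Sum>i=1..n. w i) \<le> lam (Suc l) * B + a * (lam (Suc l) * B)"
    by (simp add: algebra_simps)
  also have "\<dots> = (a + 1) * (lam (Suc l) * B)"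
    by (simp add: algebra_simps)
  also have "\<dots> \<le> (a + 1) * (\<Sum>i=1..n. lam i * w i)"
    using tail_bound \<open>0 \<le> a\<close> by (intro mult_left_mono) auto
  finally show ?thesis .
qed

lemma bb_step_le_if_head_dominated:
  assumes "l < n" and "0 \<le> gm" "gm \<le> 1"
    and lam_mono: "mono_on {1..n} lam" and lam_nonneg: "\<And>i. i \<in> {1..n} \<Longrightarrow> 0 \<le> lam i"
    and head: "2 * (\<Sum>i=1..l. g i ^ 2) \<le> g (Suc l) ^ 2"
  shows "2 * lam (Suc l) * bb_step n lam gm g \<le> 3"
proof -
  define \<mu> where "\<mu> = spec_moment n lam g"
  have tail: "lam (Suc l) \<le> lam i" if "i \<in> {Suc l..n}" for i
    using that \<open>l < n\<close> by (auto intro: mono_onD[OF lam_mono])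
  have lam_l: "0 \<le> lam (Suc l)"
    using lam_nonneg \<open>l < n\<close> by simp
  have "2 * lam (Suc l) * (\<Sum>i=1..n. g i ^ 2) \<le> (2 + 1) * (\<Sum>i=1..n. lam i * g i ^ 2)"
    by (rule weighted_sum_ge_if_tail_dominates[of l n 2 "\<lambda>i. g i ^ 2" lam])
      (use \<open>l < n\<close> lam_nonneg tail head in auto)
  then have \<mu>01: "2 * lam (Suc l) * \<mu> 0 \<le> 3 * \<mu> 1"
    by (simp add: \<mu>_def spec_moment_def)
  have "2 * (\<Sum>i=1..l. lam i * g i ^ 2) \<le> lam (Suc l) * (2 * (\<Sum>i=1..l. g i ^ 2))"
    unfolding sum_distrib_left
    using \<open>l < n\<close> by (auto intro!: sum_mono mult_right_mono mono_onD[OF lam_mono])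
  also have "\<dots> \<le> lam (Suc l) * g (Suc l) ^ 2"
    using head lam_l by (rule mult_left_mono)
  finally have head2: "2 * (\<Sum>i=1..l. lam i * g i ^ 2) \<le> lam (Suc l) * g (Suc l) ^ 2" .
  have "2 * lam (Suc l) * (\<Sum>i=1..n. lam i * g i ^ 2) \<le> (2 + 1) * (\<Sum>i=1..n. lam i * (lam i * g i ^ 2))"
    by (rule weighted_sum_ge_if_tail_dominates[of l n 2 "\<lambda>i. lam i * g i ^ 2" lam])
      (use \<open>l < n\<close> lam_nonneg tail head2 in auto)
  then have \<mu>12: "2 * lam (Suc l) * \<mu> 1 \<le> 3 * \<mu> 2"
    by (simp add: \<mu>_def spec_moment_def power2_eq_square mult.assoc)
  have quotient_le: "2 * lam (Suc l) * (\<mu> p / \<mu> (Suc p)) \<le> 3"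
    if "2 * lam (Suc l) * \<mu> p \<le> 3 * \<mu> (Suc p)" for p
  proof (cases "\<mu> (Suc p) = 0")
    case False
    moreover have "0 \<le> \<mu> (Suc p)"
      unfolding \<mu>_def spec_moment_def using lam_nonneg by (auto intro!: sum_nonneg)
    ultimately show ?thesis
      using that by (simp add: field_simps)
  qed simp
  have "2 * lam (Suc l) * bb_step n lam gm g
          = gm * (2 * lam (Suc l) * (\<mu> 0 / \<mu> 1)) + (1 - gm) * (2 * lam (Suc l) * (\<mu> 1 / \<mu> 2))"
    by (simp add: bb_step_def \<mu>_def algebra_simps)
  also have "\<dots> \<le> 3"
  proof (intro convex_bound_le)
    show "2 * lam (Suc l) * (\<mu> 0 / \<mu> 1) \<le> 3"
      using quotient_le[of 0] \<mu>01 by simp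
    show "2 * lam (Suc l) * (\<mu> 1 / \<mu> 2) \<le> 3"
      using quotient_le[of 1] \<mu>12 by (simp add: numeral_2_eq_2)
  qed (use assms(2,3) in auto)
  finally show ?thesis .
qed

lemma abs_one_minus_mult_le:
  fixes a lm L :: real
  assumes "1 / L \<le> a" "a \<le> 1" "1 \<le> lm" "lm \<le> L"
  shows "\<bar>1 - a * lm\<bar> \<le> L"
    and "2 * lm * a \<le> 3 \<Longrightarrow> \<bar>1 - a * lm\<bar> \<le> max (1/2) (1 - 1 / L)"
proof -
  have "1 \<le> L" "0 < a"
    using assms by (auto intro: less_le_trans[of 0 "1 / L"])
  have "1 / L * 1 \<le> a * lm" "a * lm \<le> 1 * L"
    using assms \<open>0 < a\<close> by (intro mult_mono; simp)+
  moreover have "0 < a * lm"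
    using \<open>0 < a\<close> assms by simp
  ultimately show "\<bar>1 - a * lm\<bar> \<le> L"
    using \<open>1 \<le> L\<close> by (auto simp: abs_le_iff)
  assume "2 * lm * a \<le> 3"
  then show "\<bar>1 - a * lm\<bar> \<le> max (1/2) (1 - 1 / L)"
    using \<open>1 / L * 1 \<le> a * lm\<close> by (auto simp: abs_le_iff algebra_simps)
qed

locale bb_family_gradient_method =
  fixes n :: nat and lam b :: "nat \<Rightarrow> real"
    and x :: "nat \<Rightarrow> nat \<Rightarrow> real" and alpha gamma :: "nat \<Rightarrow> real"
  assumes n_pos: "n \<ge> 1"
    and lam1: "lam 1 = 1"
    and lam_sorted: "\<And>i. 1 \<le> i \<Longrightarrow> i < n \<Longrightarrow> lam i \<le> lam (Suc i)"
    and gamma_range: "\<And>k. 0 \<le> gamma k \<and> gamma k \<le> 1"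
    and alpha1: "alpha 1 > 0"
    and iter: "\<And>k i. 1 \<le> k \<Longrightarrow> 1 \<le> i \<Longrightarrow> i \<le> n \<Longrightarrow>
                 x (Suc k) i = x k i - alpha k * grad lam b (x k) i"
    and step: "\<And>k. 2 \<le> k \<Longrightarrow> (\<exists>i\<in>{1..n}. grad lam b (x (k - 1)) i \<noteq> 0) \<Longrightarrow>
                 (let s = (\<lambda>i. x k i - x (k - 1) i);
                      y = (\<lambda>i. grad lam b (x k) i - grad lam b (x (k - 1)) i)
                  in alpha k = gamma k * (vinner n s s / vinner n s y)
                             + (1 - gamma k) * (vinner n s y / vinner n y y))"
    and grad_nonzero: "\<And>k. 1 \<le> k \<Longrightarrow> \<exists>i\<in>{1..n}. grad lam b (x k) i \<noteq> 0"
begin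

abbreviation g :: "nat \<Rightarrow> nat \<Rightarrow> real" where
  "g k \<equiv> grad lam b (x k)"

definition rate :: real where
  "rate = max (1/2) (1 - 1 / lam n)"

lemma lam_mono_on: "mono_on {1..n} lam"
proof (rule mono_onI)
  fix i j :: nat
  assume "i \<in> {1..n}" "j \<in> {1..n}" "i \<le> j"
  then have "1 \<le> i" "j \<le> n"
    by auto
  from \<open>i \<le> j\<close> \<open>j \<le> n\<close> show "lam i \<le> lam j"
  proof (induction j rule: dec_induct)
    case (step m)
    then show ?case
      using lam_sorted[of m] \<open>1 \<le> i\<close> by fastforce
  qed simp
qed

lemma lam_bounds: "i \<in> {1..n} \<Longrightarrow> 1 \<le> lam i \<and> lam i \<le> lam n"
  using mono_onD[OF lam_mono_on, of 1 i] mono_onD[OF lam_mono_on, of i n] lam1 by auto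

lemma lam_max_ge_1: "1 \<le> lam n"
  using lam_bounds[of n] n_pos by simp

lemma rate_bounds: "0 \<le> rate" "rate < 1"
  using lam_max_ge_1 by (auto simp: rate_def)

lemma grad_Suc:
  assumes "1 \<le> k" "i \<in> {1..n}"
  shows "g (Suc k) i = (1 - alpha k * lam i) * g k i"
proof -
  have x_Suc: "x (Suc k) i = x k i - alpha k * (lam i * x k i - b i)"
    using iter[of k i] assms by (simp add: grad_def)
  show ?thesis
    unfolding grad_def x_Suc by (simp add: algebra_simps)
qed

lemma alpha_Suc_eq_bb_step:
  assumes "1 \<le> k" and "alpha k \<noteq> 0"
  shows "alpha (Suc k) = bb_step n lam (gamma (Suc k)) (g k)"
proof -
  define s where "s = (\<lambda>i. x (Suc k) i - x k i)"
  define y where "y = (\<lambda>i. g (Suc k) i - g k i)"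
  have "alpha (Suc k) = gamma (Suc k) * (vinner n s s / vinner n s y)
                        + (1 - gamma (Suc k)) * (vinner n s y / vinner n y y)"
    using step[of "Suc k"] grad_nonzero[OF assms(1)] \<open>1 \<le> k\<close> by (simp add: Let_def s_def y_def)
  also have "\<dots> = bb_step n lam (gamma (Suc k)) (g k)"
  proof (rule bb_step_secant)
    show "s i = - alpha k * g k i" if "i \<in> {1..n}" for i
      using iter[of k i] that \<open>1 \<le> k\<close> by (simp add: s_def)
    show "y i = lam i * s i" for i
      by (simp add: y_def s_def grad_def algebra_simps)
  qed (use assms(2) in simp)
  finally show ?thesis .
qed

lemma alpha_bounds:
  assumes "2 \<le> k"
  shows "1 / lam n \<le> alpha k \<and> alpha k \<le> 1"
proof -
  have bb_bounds: "1 / lam n \<le> bb_step n lam (gamma (Suc k)) (g k)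
                     \<and> bb_step n lam (gamma (Suc k)) (g k) \<le> 1"
    if "1 \<le> k" for k
    using bb_step_bounds[of n lam "lam n", OF lam_bounds grad_nonzero[OF that]] gamma_range
    by blast
  from assms show ?thesis
  proof (induction k rule: nat_induct_at_least)
    case base
    show ?case
      using alpha_Suc_eq_bb_step[of 1] alpha1 bb_bounds[of 1] by (simp add: numeral_2_eq_2)
  next
    case (Suc k)
    have "alpha k \<noteq> 0"
      using Suc.IH lam_max_ge_1 by (auto dest: order.strict_trans2[of 0 "1 / lam n", rotated])
    then show ?case
      using alpha_Suc_eq_bb_step[of k] bb_bounds[of k] Suc.hyps by simp
  qed
qed

lemma alpha_nonzero: "1 \<le> k \<Longrightarrow> alpha k \<noteq> 0"
  using alpha1 alpha_bounds[of k] lam_max_ge_1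
  by (cases "k = 1") (auto dest: order.strict_trans2[of 0 "1 / lam n", rotated])

lemma grad_sq_Suc_le:
  assumes "1 \<le> k" "i \<in> {1..n}" and "\<bar>1 - alpha k * lam i\<bar> \<le> c"
  shows "g (Suc k) i ^ 2 \<le> c\<^sup>2 * g k i ^ 2"
proof -
  have "(1 - alpha k * lam i)\<^sup>2 \<le> c\<^sup>2"
    using assms(3) abs_le_square_iff[of "1 - alpha k * lam i" c] by simp
  then show ?thesis
    using grad_Suc[OF assms(1,2)] by (simp add: power_mult_distrib mult_right_mono)
qed

lemma grad_sq_Suc_le_growth:
  "2 \<le> k \<Longrightarrow> i \<in> {1..n} \<Longrightarrow> g (Suc k) i ^ 2 \<le> (lam n)\<^sup>2 * g k i ^ 2"
  using grad_sq_Suc_le abs_one_minus_mult_le(1) alpha_bounds lam_bounds by simp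

lemma grad_sq_contracts_if_head_dominated:
  assumes "2 \<le> k" "l < n" and head: "2 * (\<Sum>i=1..l. g k i ^ 2) \<le> g k (Suc l) ^ 2"
  shows "g (Suc (Suc k)) (Suc l) ^ 2 \<le> rate\<^sup>2 * g (Suc k) (Suc l) ^ 2"
proof -
  have "alpha (Suc k) = bb_step n lam (gamma (Suc k)) (g k)"
    using alpha_Suc_eq_bb_step alpha_nonzero \<open>2 \<le> k\<close> by simp
  moreover have "2 * lam (Suc l) * bb_step n lam (gamma (Suc k)) (g k) \<le> 3"
    using bb_step_le_if_head_dominated[OF \<open>l < n\<close> _ _ lam_mono_on _ head] gamma_range lam_bounds
    by force
  ultimately have "\<bar>1 - alpha (Suc k) * lam (Suc l)\<bar> \<le> rate"
    unfolding rate_def using alpha_bounds[of "Suc k"] lam_bounds[of "Suc l"] assms(1,2)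
    by (intro abs_one_minus_mult_le(2)) auto
  then show ?thesis
    using grad_sq_Suc_le assms(1,2) by simp
qed

lemma head_sum_r_linear: "l \<le> n \<Longrightarrow> r_linear_from 2 (\<lambda>k. \<Sum>i=1..l. g k i ^ 2)"
proof (induction l)
  case 0
  then show ?case
    by (simp add: r_linear_from_zero)
next
  case (Suc l)
  have head: "r_linear_from 2 (\<lambda>k. \<Sum>i=1..l. g k i ^ 2)"
    using Suc by simp
  have "r_linear_from 2 (\<lambda>k. g k (Suc l) ^ 2)"
  proof (rule r_linear_from_two_step)
    show "r_linear_from 2 (\<lambda>k. 2 * (\<Sum>i=1..l. g k i ^ 2))"
      using head by (rule r_linear_from_cmult[rotated]) simp
    show "g (Suc k) (Suc l) ^ 2 \<le> (lam n)\<^sup>2 * g k (Suc l) ^ 2" if "2 \<le> k" for k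
      using grad_sq_Suc_le_growth that Suc.prems by simp
    show "g (Suc (Suc k)) (Suc l) ^ 2 \<le> rate\<^sup>2 * g (Suc k) (Suc l) ^ 2"
      if "2 \<le> k" "2 * (\<Sum>i=1..l. g k i ^ 2) \<le> g k (Suc l) ^ 2" for k
      using grad_sq_contracts_if_head_dominated that Suc.prems by simp
  qed (use rate_bounds in \<open>auto simp: power_less_one_iff\<close>)
  from r_linear_from_add[OF head this] show ?case
    by simp
qed

lemma grad_norm_r_linear: "r_linear_from 1 (\<lambda>k. vnorm n (g k))"
proof -
  have "vnorm n (g k) = sqrt (\<Sum>i=1..n. g k i ^ 2)" for k
    by (simp add: vnorm_def vinner_def power2_eq_square)
  moreover have "r_linear_from (Suc 1) (\<lambda>k. sqrt (\<Sum>i=1..n. g k i ^ 2))"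
    using r_linear_from_sqrt[OF head_sum_r_linear[OF order_refl]] by (simp add: numeral_2_eq_2)
  ultimately show ?thesis
    using r_linear_from_Suc by presburger
qed

end

theorem theorem3:
  fixes n :: nat and lam b :: "nat \<Rightarrow> real"
    and x :: "nat \<Rightarrow> nat \<Rightarrow> real" and alpha gamma :: "nat \<Rightarrow> real"
  assumes n_pos: "n \<ge> 1"
    and lam1: "lam 1 = 1"
    and lam_sorted: "\<And>i. 1 \<le> i \<Longrightarrow> i < n \<Longrightarrow> lam i \<le> lam (Suc i)"
    and gamma_range: "\<And>k. 0 \<le> gamma k \<and> gamma k \<le> 1"
    and alpha1: "alpha 1 > 0"
    and iter: "\<And>k i. 1 \<le> k \<Longrightarrow> 1 \<le> i \<Longrightarrow> i \<le> n \<Longrightarrow>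
                 x (Suc k) i = x k i - alpha k * grad lam b (x k) i"
    and step: "\<And>k. 2 \<le> k \<Longrightarrow> (\<exists>i\<in>{1..n}. grad lam b (x (k - 1)) i \<noteq> 0) \<Longrightarrow>
                 (let s = (\<lambda>i. x k i - x (k - 1) i);
                      y = (\<lambda>i. grad lam b (x k) i - grad lam b (x (k - 1)) i)
                  in alpha k = gamma k * (vinner n s s / vinner n s y)
                             + (1 - gamma k) * (vinner n s y / vinner n y y))"
  shows "(\<exists>k\<ge>1. \<forall>i\<in>{1..n}. grad lam b (x k) i = 0)
         \<or> (\<exists>C c. C > 0 \<and> 0 < c \<and> c < 1 \<and>
               (\<forall>k\<ge>1. vnorm n (grad lam b (x k)) \<le> C * c ^ k))"
proof (cases "\<exists>k\<ge>1. \<forall>i\<in>{1..n}. grad lam b (x k) i = 0")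
  case False
  then interpret bb_family_gradient_method n lam b x alpha gamma
    by unfold_locales (use assms in auto)
  show ?thesis
    using grad_norm_r_linear unfolding r_linear_from_def by blast
qed blast

end
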